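(* Let $G$ be a separable metrizable NSS group and let $X$ be a $G$-regular space. Then $X$ is compact and metrizable if and only if $C_p(X,G)$ is a TAP group with a countable network.
   Context: All spaces are Tychonoff and non-empty; topological groups are Hausdorff; $e$ is the identity of $G$. $C_p(X,G)$ is the group of continuous maps $X\to G$ with pointwise operations and the topology of pointwise convergence. $X$ is $G$-regular if for every closed $F\subseteq X$ and every $x\in X\setminus F$ there exist $f\in C_p(X,G)$ and $g\in G\setminus\{e\}$ with $f(x)=g$ and $f(F)\subseteq\{e\}$. NSS: some open neighborhood of the identity contains no nontrivial subgroup. A subset $A$ of a topological group $H$ is absolutely productive if for every injection $a:\mathbb{N}\to A$ and every $z:\mathbb{N}\to\mathbb{Z}$ the sequence $\left(\prod_{n=0}^{k}a(n)^{z(n)}\right)_{k}$ converges in $H$; $H$ is TAP if all absolutely productive subsets are finite. *)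

theory Defs
  imports "HOL-Analysis.Analysis" "HOL-Library.Function_Algebras"
begin

text \<open>Groups are written additively (type class group_add, not necessarily commutative).
  Integer multiple z*a (the paper's a^z).\<close>
definition zmul :: "int \<Rightarrow> 'h::group_add \<Rightarrow> 'h" where
  "zmul z a = (if 0 \<le> z then (((+) a) ^^ nat z) 0 else - ((((+) a) ^^ nat (- z)) 0))"

fun opsum :: "(nat \<Rightarrow> 'h::group_add) \<Rightarrow> (nat \<Rightarrow> int) \<Rightarrow> nat \<Rightarrow> 'h" where
  "opsum a z 0 = zmul (z 0) (a 0)"
| "opsum a z (Suc k) = opsum a z k + zmul (z (Suc k)) (a (Suc k))"

text \<open>Absolutely productive subset A of the topological group H (a subgroup of the ambient
  type, carrying the subspace topology).\<close>
definition absolutely_productive :: "'h::{group_add,topological_space} set \<Rightarrow> 'h set \<Rightarrow> bool" where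
  "absolutely_productive H A \<longleftrightarrow> A \<subseteq> H \<and>
     (\<forall>a z. inj a \<and> range a \<subseteq> A \<longrightarrow>
        (\<exists>L. limitin (subtopology euclidean H) (opsum a z) L sequentially))"

definition TAP :: "'h::{group_add,topological_space} set \<Rightarrow> bool" where
  "TAP H \<longleftrightarrow> (\<forall>A. A \<subseteq> H \<and> absolutely_productive H A \<longrightarrow> finite A)"

definition is_add_subgroup :: "'h::group_add set \<Rightarrow> bool" where
  "is_add_subgroup S \<longleftrightarrow> 0 \<in> S \<and> (\<forall>x\<in>S. \<forall>y\<in>S. x + y \<in> S) \<and> (\<forall>x\<in>S. - x \<in> S)"

definition NSS :: "'h::topological_group_add itself \<Rightarrow> bool" where
  "NSS TYPE('h) \<longleftrightarrow> (\<exists>U::'h set. open U \<and> 0 \<in> U \<and>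
      (\<forall>S. is_add_subgroup S \<and> S \<subseteq> U \<longrightarrow> S = {0}))"

text \<open>C_p(X,G) as a subset of the function space 'a => 'g; the topology on functions
  from Function_Topology is the product topology, i.e. pointwise convergence.\<close>
definition Cp :: "('a::topological_space \<Rightarrow> 'g::topological_space) set" where
  "Cp = {f. continuous_on UNIV f}"

definition G_regular :: "'a::topological_space itself \<Rightarrow> 'g::{group_add,topological_space} itself \<Rightarrow> bool" where
  "G_regular TYPE('a) TYPE('g) \<longleftrightarrow>
     (\<forall>F x. closed (F::'a set) \<and> x \<notin> F \<longrightarrow>
        (\<exists>(f::'a \<Rightarrow> 'g) g. f \<in> Cp \<and> g \<noteq> 0 \<and> f x = g \<and> f ` F \<subseteq> {0}))"

definition has_countable_network :: "'b topology \<Rightarrow> bool" where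
  "has_countable_network T \<longleftrightarrow> (\<exists>\<N>. countable \<N> \<and> (\<forall>N\<in>\<N>. N \<subseteq> topspace T) \<and>
      (\<forall>U x. openin T U \<and> x \<in> U \<longrightarrow> (\<exists>N\<in>\<N>. x \<in> N \<and> N \<subseteq> U)))"

end

theory Submission
  imports Defs
begin

text \<open>
  If \<open>X\<close> is compact metrizable, it is second countable, so the sets
  \<open>{f. f ` B\<^sub>i \<subseteq> V\<^sub>i for finitely many basic B\<^sub>i, V\<^sub>i}\<close> form a countable network of
  \<open>C\<^sub>p(X,G)\<close>. If \<open>A\<close> were an infinite absolutely productive set, NSS would force every
  evaluation sequence \<open>a\<^sub>n(y)\<close> to vanish eventually; picking multiples \<open>h\<^sub>n\<close> of distinct
  elements with \<open>h\<^sub>n(x\<^sub>n)\<close> outside a fixed neighbourhood \<open>U\<close> of \<open>0\<close>, a convergent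
  subsequence of the points \<open>x\<^sub>n\<close> and a sufficiently sparse subsequence of the \<open>h\<^sub>n\<close>
  give a product whose pointwise limit is discontinuous at \<open>lim x\<^sub>n\<close>.

  Conversely, \<open>G\<close>-regularity turns a countable network of \<open>C\<^sub>p(X,G)\<close> into one of \<open>X\<close>,
  so \<open>X\<close> is Lindelof. If \<open>X\<close> were not compact, regularity would give an increasing open
  cover \<open>W\<^sub>k\<close> with \<open>closure W\<^sub>k \<noteq> X\<close>; nonzero functions vanishing on \<open>closure W\<^sub>k\<close>
  form an infinite set all of whose products are locally eventually constant, hence converge,
  contradicting TAP. Finally, countably many members of the network separate the points of the
  compact space \<open>X\<close>, which therefore embeds into the metrizable space \<open>G\<^sup>\<nat>\<close>.
\<close>

section \<open>Integer multiples and small subgroups\<close>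

definition nmul :: "nat \<Rightarrow> 'h::group_add \<Rightarrow> 'h" where
  "nmul n g = (((+) g) ^^ n) 0"

lemma nmul_0 [simp]: "nmul 0 g = 0"
  by (simp add: nmul_def)

lemma nmul_Suc: "nmul (Suc n) g = g + nmul n g"
  by (simp add: nmul_def)

lemma nmul_add: "nmul (m + n) g = nmul m g + nmul n g"
  by (induction m) (simp_all add: nmul_Suc add.assoc)

lemma nmul_zero_right [simp]: "nmul n (0::'h::group_add) = 0"
  by (induction n) (simp_all add: nmul_Suc)

lemma zmul_eq_nmul: "zmul z g = (if 0 \<le> z then nmul (nat z) g else - nmul (nat (- z)) g)"
  by (simp add: zmul_def nmul_def)

lemma zmul_of_nat: "zmul (int n) g = nmul n g"
  by (simp add: zmul_eq_nmul)

lemma zmul_minus_of_nat: "zmul (- int n) g = - nmul n g"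
  by (cases "n = 0") (simp_all add: zmul_eq_nmul)

lemma zmul_zero_left [simp]: "zmul 0 g = 0"
  by (simp add: zmul_def)

lemma zmul_one [simp]: "zmul 1 g = g"
  by (simp add: zmul_def)

lemma zmul_zero_right [simp]: "zmul z (0::'h::group_add) = 0"
  by (simp add: zmul_eq_nmul)

lemma nmul_diff:
  "nmul m g - nmul n g = (if n \<le> m then nmul (m - n) g else - nmul (n - m) g)"
proof (cases "n \<le> m")
  case True
  then have "nmul m g = nmul (m - n) g + nmul n g"
    by (metis nmul_add le_add_diff_inverse2)
  then show ?thesis using True by simp
next
  case False
  then have "nmul n g = nmul (n - m) g + nmul m g"
    by (metis nmul_add le_add_diff_inverse2 nat_le_linear)
  then have "nmul m g - nmul n g = - nmul (n - m) g"
    by (simp only: diff_conv_add_uminus minus_add add_minus_cancel)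
  then show ?thesis using False by simp
qed

lemma minus_nmul_add:
  "- nmul m g + nmul n g = (if m \<le> n then nmul (n - m) g else - nmul (m - n) g)"
proof (cases "m \<le> n")
  case True
  then have "nmul n g = nmul m g + nmul (n - m) g"
    by (metis nmul_add le_add_diff_inverse)
  then show ?thesis using True by (simp add: add.assoc[symmetric])
next
  case False
  then have "nmul m g = nmul n g + nmul (m - n) g"
    by (metis nmul_add le_add_diff_inverse nat_le_linear)
  then show ?thesis using False by (simp add: minus_add add.assoc)
qed

definition cyclic_add_subgroup :: "'h::group_add \<Rightarrow> 'h set" where
  "cyclic_add_subgroup g = range (\<lambda>n. nmul n g) \<union> range (\<lambda>n. - nmul n g)"

lemma is_add_subgroup_cyclic: "is_add_subgroup (cyclic_add_subgroup g)"
  unfolding is_add_subgroup_def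
proof (intro conjI ballI)
  show "0 \<in> cyclic_add_subgroup g"
    unfolding cyclic_add_subgroup_def by (metis UnI1 nmul_0 rangeI)
  fix x y assume "x \<in> cyclic_add_subgroup g" "y \<in> cyclic_add_subgroup g"
  then obtain m n where x: "x = nmul m g \<or> x = - nmul m g" and y: "y = nmul n g \<or> y = - nmul n g"
    unfolding cyclic_add_subgroup_def by blast
  have "- nmul m g + - nmul n g = - nmul (n + m) g"
    by (simp add: nmul_add minus_add)
  with x y show "x + y \<in> cyclic_add_subgroup g"
    unfolding cyclic_add_subgroup_def
    by (auto simp: nmul_diff minus_nmul_add nmul_add[symmetric])
  show "- x \<in> cyclic_add_subgroup g"
    using x unfolding cyclic_add_subgroup_def by auto
qed

lemma NSS_escaping_nbhdE:
  assumes "NSS TYPE('g)"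
  obtains U :: "'g::topological_group_add set"
  where "open U" "0 \<in> U" "\<And>g. g \<noteq> 0 \<Longrightarrow> \<exists>k. zmul k g \<notin> U"
proof -
  obtain U :: "'g set" where U: "open U" "0 \<in> U"
    and no_subgroup: "\<And>S. is_add_subgroup S \<and> S \<subseteq> U \<Longrightarrow> S = {0}"
    using assms unfolding NSS_def by blast
  have "\<exists>k. zmul k g \<notin> U" if "g \<noteq> 0" for g
  proof -
    have "g \<in> cyclic_add_subgroup g"
      unfolding cyclic_add_subgroup_def by (metis UnI1 nmul_Suc nmul_0 add_0_right rangeI)
    then have "\<not> cyclic_add_subgroup g \<subseteq> U"
      using no_subgroup is_add_subgroup_cyclic that by blast
    then obtain n where "nmul n g \<notin> U \<or> - nmul n g \<notin> U"
      unfolding cyclic_add_subgroup_def by blast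
    then show ?thesis by (metis zmul_of_nat zmul_minus_of_nat)
  qed
  with U that show ?thesis by blast
qed

lemma nhds_minus_add_subsetE:
  fixes U :: "'g::topological_group_add set"
  assumes "open U" "0 \<in> U"
  obtains V where "open V" "0 \<in> V" "\<And>v w. v \<in> V \<Longrightarrow> w \<in> V \<Longrightarrow> - v + w \<in> U"
proof -
  have "open ((\<lambda>p::'g \<times> 'g. - fst p + snd p) -` U)"
    using assms(1) by (intro open_vimage continuous_intros)
  moreover have "(0, 0) \<in> (\<lambda>p::'g \<times> 'g. - fst p + snd p) -` U"
    using assms(2) by simp
  ultimately obtain A B where "open A" "open B" "(0, 0) \<in> A \<times> B"
    "A \<times> B \<subseteq> (\<lambda>p::'g \<times> 'g. - fst p + snd p) -` U"
    by (rule open_prod_elim)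
  then show ?thesis by (intro that[of "A \<inter> B"]) auto
qed

lemma productive_sequence_eventually_zero:
  fixes g :: "nat \<Rightarrow> 'g::topological_group_add"
  assumes nss: "NSS TYPE('g)"
    and conv: "\<And>z. \<exists>L. (opsum g z \<longlongrightarrow> L) sequentially"
  shows "\<forall>\<^sub>F n in sequentially. g n = 0"
proof -
  obtain U :: "'g set" where U: "open U" "0 \<in> U" "\<And>g. g \<noteq> 0 \<Longrightarrow> \<exists>k. zmul k g \<notin> U"
    using NSS_escaping_nbhdE[OF nss] by blast
  have "\<exists>k. g n \<noteq> 0 \<longrightarrow> zmul k (g n) \<notin> U" for n
    using U(3) by blast
  then obtain m where m: "\<And>n. g n \<noteq> 0 \<Longrightarrow> zmul (m n) (g n) \<notin> U"
    by metis
  obtain L where L: "(opsum g m \<longlongrightarrow> L) sequentially"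
    using conv by blast
  have "((\<lambda>n. - opsum g m n + opsum g m (Suc n)) \<longlongrightarrow> - L + L) sequentially"
    by (intro tendsto_add tendsto_minus L LIMSEQ_Suc)
  then have "((\<lambda>n. zmul (m (Suc n)) (g (Suc n))) \<longlongrightarrow> 0) sequentially"
    by (simp add: add.assoc[symmetric])
  then have "\<forall>\<^sub>F n in sequentially. zmul (m (Suc n)) (g (Suc n)) \<in> U"
    using U(1,2) by (rule topological_tendstoD)
  then have "\<forall>\<^sub>F n in sequentially. g (Suc n) = 0"
    by (rule eventually_mono) (use m in blast)
  then show ?thesis
    using eventually_sequentially_Suc[of "\<lambda>n. g n = 0"] by blast
qed

section \<open>Ordered products in \<open>C\<^sub>p(X,G)\<close>\<close>

lemma opsum_constant_after:
  fixes a :: "nat \<Rightarrow> 'h::group_add"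
  assumes "\<And>j. n < j \<Longrightarrow> j \<le> n' \<Longrightarrow> zmul (z j) (a j) = 0" "n \<le> n'"
  shows "opsum a z n' = opsum a z n"
  using assms by (induction n') (auto simp: le_Suc_eq)

lemma opsum_eq_0:
  fixes a :: "nat \<Rightarrow> 'h::group_add"
  assumes "\<And>j. j \<le> n \<Longrightarrow> zmul (z j) (a j) = 0"
  shows "opsum a z n = 0"
  using assms by (induction n) simp_all

lemma opsum_indicator_times:
  "opsum a (\<lambda>n. indicator S n * m n) k = opsum (\<lambda>n. zmul (m n) (a n)) (indicator S) k"
  by (induction k) (simp_all add: indicator_def)

lemma opsum_indicator_range:
  fixes a :: "nat \<Rightarrow> 'h::group_add"
  assumes r: "strict_mono r"
  shows "opsum a (indicator (range r)) (r k) = opsum (a \<circ> r) (\<lambda>_. 1) k"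
proof (induction k)
  case 0
  have "j \<notin> range r" if "j < r 0" for j
    using that r by (auto simp: strict_mono_less)
  moreover have "r 0 \<in> range r"
    by simp
  ultimately show ?case
    by (cases "r 0") (auto simp: opsum_eq_0 indicator_def)
next
  case (Suc k)
  have gap: "j \<notin> range r" if "r k < j" "j < r (Suc k)" for j
    using that r by (auto simp: strict_mono_less)
  have "r k < r (Suc k)"
    using r by (simp add: strict_mono_less)
  then obtain p where p: "r (Suc k) = Suc p" "r k \<le> p"
    by (metis Suc_le_D Suc_le_eq less_Suc_eq_le)
  have "opsum a (indicator (range r)) p = opsum a (indicator (range r)) (r k)"
    by (rule opsum_constant_after[OF _ p(2)]) (use gap p in auto)
  moreover have "indicator (range r) (Suc p) = (1::int)"
    using p(1) by (metis indicator_simps(1) rangeI)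
  ultimately show ?case
    using Suc p(1) by simp
qed

lemma zmul_apply: "zmul k (f::'a \<Rightarrow> 'g::group_add) y = zmul k (f y)"
proof -
  have "nmul n f y = nmul n (f y)" for n
    by (induction n) (simp_all add: nmul_Suc)
  then show ?thesis by (simp add: zmul_eq_nmul)
qed

lemma opsum_apply: "opsum (a::nat \<Rightarrow> 'a \<Rightarrow> 'g::group_add) z k y = opsum (\<lambda>n. a n y) z k"
  by (induction k) (simp_all add: zmul_apply)

lemma continuous_on_zmul:
  fixes f :: "'a::topological_space \<Rightarrow> 'g::topological_group_add"
  assumes "continuous_on S f"
  shows "continuous_on S (zmul k f)"
proof -
  have "continuous_on S (\<lambda>y. nmul n (f y))" for n
    by (induction n) (simp_all add: nmul_Suc continuous_on_add assms)
  then show ?thesis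
    unfolding zmul_apply[abs_def]
    by (cases "0 \<le> k") (simp_all add: zmul_eq_nmul continuous_on_minus)
qed

lemma Cp_zero: "(0 :: 'a::topological_space \<Rightarrow> 'g::topological_group_add) \<in> Cp"
  by (simp add: Cp_def zero_fun_def)

lemma Cp_add: "f \<in> Cp \<Longrightarrow> g \<in> Cp \<Longrightarrow> (f + g :: 'a::topological_space \<Rightarrow> 'g::topological_group_add) \<in> Cp"
  unfolding Cp_def plus_fun_def by (simp add: continuous_on_add)

lemma Cp_zmul: "f \<in> Cp \<Longrightarrow> zmul k (f :: 'a::topological_space \<Rightarrow> 'g::topological_group_add) \<in> Cp"
  unfolding Cp_def by (simp add: continuous_on_zmul)

lemma opsum_in_Cp:
  fixes a :: "nat \<Rightarrow> 'a::topological_space \<Rightarrow> 'g::topological_group_add"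
  assumes "\<And>n. a n \<in> Cp"
  shows "opsum a z k \<in> Cp"
  by (induction k) (simp_all only: opsum.simps assms Cp_add Cp_zmul)

lemma limitin_Cp_iff:
  fixes f :: "'b \<Rightarrow> 'a::topological_space \<Rightarrow> 'g::topological_group_add"
  shows "limitin (subtopology euclidean Cp) f l F \<longleftrightarrow>
     l \<in> Cp \<and> (\<forall>\<^sub>F n in F. f n \<in> Cp) \<and> (\<forall>y. ((\<lambda>n. f n y) \<longlongrightarrow> l y) F)"
proof -
  have "(f \<longlongrightarrow> l) F \<longleftrightarrow> limitin (product_topology (\<lambda>_. euclidean) UNIV) f l F"
    by (simp add: euclidean_product_topology)
  then show ?thesis
    by (simp add: limitin_subtopology limitin_componentwise)
qed

section \<open>Sequentially compact spaces give TAP groups\<close>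

lemma bump_subsequenceE:
  fixes h :: "nat \<Rightarrow> 'a::topological_space \<Rightarrow> 'g::topological_group_add"
  assumes h_cont: "\<And>n. continuous_on UNIV (h n)"
    and h_vanish: "\<And>q. \<forall>\<^sub>F n in sequentially. h n q = 0"
    and h_bump: "\<forall>\<^sub>F n in sequentially. h n (x n) \<notin> U"
    and x_lim: "(x \<longlongrightarrow> p) sequentially"
    and V: "open V" "0 \<in> V"
  obtains r where "strict_mono r" "\<And>k. h (r k) (x (r k)) \<notin> U" "\<And>k. h (r k) p = 0"
    "\<And>k j. k < j \<Longrightarrow> h (r j) (x (r k)) = 0"
    "\<And>k. opsum (h \<circ> r) (\<lambda>_. 1) k (x (r (Suc k))) \<in> V"
proof -
  obtain N where N: "\<And>n. N \<le> n \<Longrightarrow> h n p = 0 \<and> h n (x n) \<notin> U"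
    using eventually_conj[OF h_vanish[of p] h_bump] unfolding eventually_sequentially by blast
  \<comment> \<open>The recursion carries the last chosen index \<open>i\<close> and the partial product \<open>q\<close> of the
    bumps chosen so far; the next index is so large that the bumps beyond it vanish at \<open>x i\<close>
    and that \<open>q\<close>, being continuous and zero at \<open>p\<close>, lies in \<open>V\<close> at the next point.\<close>
  define Inv where "Inv i q \<longleftrightarrow> N \<le> i \<and> continuous_on UNIV q \<and> q p = 0"
    for i and q :: "'a \<Rightarrow> 'g"
  have step: "\<exists>i'. i < i' \<and> Inv i' (q + h i') \<and> (\<forall>n\<ge>i'. h n (x i) = 0) \<and> q (x i') \<in> V"
    if "Inv i q" for i q
  proof -
    have "((\<lambda>n. q (x n)) \<longlongrightarrow> q p) sequentially"
      using that x_lim unfolding Inv_def by (intro continuous_on_tendsto_compose[of UNIV q]) auto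
    then have "\<forall>\<^sub>F n in sequentially. q (x n) \<in> V"
      using that V unfolding Inv_def by (auto dest: topological_tendstoD)
    then obtain K where K: "\<And>n. K \<le> n \<Longrightarrow> q (x n) \<in> V"
      unfolding eventually_sequentially by blast
    obtain M where M: "\<And>n. M \<le> n \<Longrightarrow> h n (x i) = 0"
      using h_vanish[of "x i"] unfolding eventually_sequentially by blast
    define i' where "i' = max (Suc i) (max N (max M K))"
    have i': "i < i'" "N \<le> i'" "M \<le> i'" "K \<le> i'"
      unfolding i'_def by auto
    have "Inv i' (q + h i')"
      using that N[OF i'(2)] h_cont[of i'] i'(2) unfolding Inv_def plus_fun_def
      by (auto intro: continuous_on_add)
    with i' K M show ?thesis
      by (intro exI[of _ i']) auto
  qed
  define P where "P n s \<longleftrightarrow> Inv (fst s) (snd s) \<and> (n = 0 \<longrightarrow> snd s = h (fst s))"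
    for n :: nat and s :: "nat \<times> ('a \<Rightarrow> 'g)"
  define R where "R s s' \<longleftrightarrow> fst s < fst s' \<and> snd s' = snd s + h (fst s')
      \<and> (\<forall>n\<ge>fst s'. h n (x (fst s)) = 0) \<and> snd s (x (fst s')) \<in> V"
    for s s' :: "nat \<times> ('a \<Rightarrow> 'g)"
  have "\<exists>s. P 0 s"
    using N[of N] h_cont[of N] unfolding P_def Inv_def by (intro exI[of _ "(N, h N)"]) auto
  moreover have "\<exists>s'. P (Suc n) s' \<and> R s s'" if s: "P n s" for n s
  proof -
    obtain i' where "fst s < i'" "Inv i' (snd s + h i')" "\<forall>n\<ge>i'. h n (x (fst s)) = 0"
      "snd s (x i') \<in> V"
      using step s unfolding P_def by blast
    then show ?thesis
      unfolding P_def R_def by (intro exI[of _ "(i', snd s + h i')"]) auto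
  qed
  ultimately obtain f where f: "\<And>n. P n (f n)" "\<And>n. R (f n) (f (Suc n))"
    using dependent_nat_choice[of P "\<lambda>_. R"] by blast
  define r where "r k = fst (f k)" for k
  have partial_sum: "snd (f k) = opsum (h \<circ> r) (\<lambda>_. 1) k" for k
    by (induction k) (use f in \<open>auto simp: P_def R_def r_def\<close>)
  have r: "strict_mono r"
    unfolding strict_mono_Suc_iff r_def using f(2) by (simp add: R_def)
  show thesis
  proof (rule that[OF r])
    show "h (r k) (x (r k)) \<notin> U" "h (r k) p = 0" for k
      using f(1)[of k] N unfolding P_def Inv_def r_def by auto
    show "h (r j) (x (r k)) = 0" if "k < j" for k j
    proof -
      have "r (Suc k) \<le> r j"
        using that r by (simp add: strict_mono_less_eq)
      then show ?thesis using f(2)[of k] unfolding R_def r_def by auto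
    qed
    show "opsum (h \<circ> r) (\<lambda>_. 1) k (x (r (Suc k))) \<in> V" for k
      using f(2)[of k] partial_sum[of k] unfolding R_def r_def by auto
  qed
qed

lemma bump_sum_not_continuous:
  fixes g :: "nat \<Rightarrow> 'a::topological_space \<Rightarrow> 'g::{topological_group_add,t2_space}"
  assumes y_lim: "(y \<longlongrightarrow> p) sequentially"
    and g_p: "\<And>k. g k p = 0"
    and g_later: "\<And>k j. k < j \<Longrightarrow> g j (y k) = 0"
    and g_bump: "\<And>k. g k (y k) \<notin> U"
    and V: "open V" "0 \<in> V" "\<And>v w. v \<in> V \<Longrightarrow> w \<in> V \<Longrightarrow> - v + w \<in> U"
    and partial: "\<And>k. opsum g (\<lambda>_. 1) k (y (Suc k)) \<in> V"
    and L: "\<And>q. ((\<lambda>k. opsum g (\<lambda>_. 1) k q) \<longlongrightarrow> L q) sequentially"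
  shows "\<not> continuous_on UNIV L"
proof
  assume L_cont: "continuous_on UNIV L"
  have "opsum g (\<lambda>_. 1) k p = 0" for k
    unfolding opsum_apply by (rule opsum_eq_0) (simp add: g_p)
  then have "L p = 0"
    using LIMSEQ_unique[OF L[of p]] by simp
  have L_y: "L (y (Suc k)) = opsum g (\<lambda>_. 1) (Suc k) (y (Suc k))" for k
  proof -
    have "opsum g (\<lambda>_. 1) n (y (Suc k)) = opsum g (\<lambda>_. 1) (Suc k) (y (Suc k))" if "Suc k \<le> n" for n
      unfolding opsum_apply by (rule opsum_constant_after[OF _ that]) (simp add: g_later)
    then have "((\<lambda>n. opsum g (\<lambda>_. 1) n (y (Suc k))) \<longlongrightarrow> opsum g (\<lambda>_. 1) (Suc k) (y (Suc k)))
        sequentially"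
      by (intro tendsto_eventually) (auto simp: eventually_sequentially)
    then show ?thesis using LIMSEQ_unique[OF L] by blast
  qed
  have "((\<lambda>k. L (y k)) \<longlongrightarrow> 0) sequentially"
    using continuous_on_tendsto_compose[OF L_cont y_lim] \<open>L p = 0\<close> by simp
  then have "\<forall>\<^sub>F k in sequentially. L (y k) \<in> V"
    using V(1,2) by (rule topological_tendstoD)
  then obtain k where "L (y (Suc k)) \<in> V"
    unfolding eventually_sequentially by (meson le_SucI order_refl)
  then have "- opsum g (\<lambda>_. 1) k (y (Suc k)) + L (y (Suc k)) \<in> U"
    using V(3) partial by blast
  also have "- opsum g (\<lambda>_. 1) k (y (Suc k)) + L (y (Suc k)) = g (Suc k) (y (Suc k))"
    unfolding L_y by (simp add: add.assoc[symmetric])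
  finally show False
    using g_bump by blast
qed

lemma TAP_Cp_if_seq_compact:
  assumes nss: "NSS TYPE('g::{topological_group_add,t2_space})"
    and seq: "seq_compact (UNIV :: 'a::topological_space set)"
  shows "TAP (Cp :: ('a \<Rightarrow> 'g) set)"
  unfolding TAP_def
proof (intro allI impI, elim conjE, rule ccontr)
  fix A :: "('a \<Rightarrow> 'g) set"
  assume A_Cp: "A \<subseteq> Cp" and A_ap: "absolutely_productive Cp A" and "infinite A"
  obtain U :: "'g set" where U: "open U" "0 \<in> U" "\<And>g. g \<noteq> 0 \<Longrightarrow> \<exists>k. zmul k g \<notin> U"
    using NSS_escaping_nbhdE[OF nss] by blast
  obtain V where V: "open V" "0 \<in> V" "\<And>v w. v \<in> V \<Longrightarrow> w \<in> V \<Longrightarrow> - v + w \<in> U"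
    using nhds_minus_add_subsetE[OF U(1,2)] by blast
  obtain a :: "nat \<Rightarrow> 'a \<Rightarrow> 'g" where a: "inj a" "range a \<subseteq> A"
    using infinite_countable_subset[OF \<open>infinite A\<close>] by blast
  have conv: "\<exists>L\<in>Cp. \<forall>q. ((\<lambda>k. opsum a z k q) \<longlongrightarrow> L q) sequentially" for z
    using A_ap a unfolding absolutely_productive_def limitin_Cp_iff by blast
  have a_vanish: "\<forall>\<^sub>F n in sequentially. a n q = 0" for q
    by (rule productive_sequence_eventually_zero[OF nss]) (use conv in \<open>auto simp: opsum_apply\<close>)
  have "finite {n. a n = 0}"
    using finite_vimageI[OF finite.insertI[OF finite.emptyI] a(1), of 0] by (simp add: vimage_def)
  then have a_nonzero: "\<forall>\<^sub>F n in sequentially. a n \<noteq> 0"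
    unfolding cofinite_eq_sequentially[symmetric] eventually_cofinite by simp
  have "\<exists>x m. a n \<noteq> 0 \<longrightarrow> zmul m (a n x) \<notin> U" for n
    using U(3) by (metis fun_eq_iff zero_fun_def)
  then obtain x m where xm: "\<And>n. a n \<noteq> 0 \<Longrightarrow> zmul (m n) (a n (x n)) \<notin> U"
    by metis
  define h where "h n = zmul (m n) (a n)" for n
  have h_apply: "h n q = zmul (m n) (a n q)" for n q
    unfolding h_def by (rule zmul_apply)
  obtain \<phi> p where \<phi>: "strict_mono \<phi>" "((x \<circ> \<phi>) \<longlongrightarrow> p) sequentially"
    using seq_compactE[OF seq, of x] by blast
  have along_\<phi>: "\<forall>\<^sub>F n in sequentially. P (\<phi> n)" if "\<forall>\<^sub>F n in sequentially. P n" for P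
    using that filterlim_subseq[OF \<phi>(1)] by (simp add: filterlim_iff)
  obtain r where r: "strict_mono r" "\<And>k. h (\<phi> (r k)) (x (\<phi> (r k))) \<notin> U"
    "\<And>k. h (\<phi> (r k)) p = 0" "\<And>k j. k < j \<Longrightarrow> h (\<phi> (r j)) (x (\<phi> (r k))) = 0"
    "\<And>k. opsum (h \<circ> (\<phi> \<circ> r)) (\<lambda>_. 1) k (x (\<phi> (r (Suc k)))) \<in> V"
  proof (rule bump_subsequenceE[of "h \<circ> \<phi>" "x \<circ> \<phi>" U p V])
    show "continuous_on UNIV ((h \<circ> \<phi>) n)" for n
      using A_Cp a Cp_zmul unfolding h_def Cp_def by auto
    show "\<forall>\<^sub>F n in sequentially. (h \<circ> \<phi>) n q = 0" for q
      using along_\<phi>[OF a_vanish[of q]] by (auto elim: eventually_mono simp: h_apply)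
    show "\<forall>\<^sub>F n in sequentially. (h \<circ> \<phi>) n ((x \<circ> \<phi>) n) \<notin> U"
      using along_\<phi>[OF a_nonzero] by (auto elim: eventually_mono simp: h_apply xm)
  qed (use \<phi> V that in \<open>simp_all add: comp_assoc\<close>)
  define s where "s = \<phi> \<circ> r"
  have s: "strict_mono s"
    unfolding s_def using \<phi>(1) r(1) by (rule strict_mono_o)
  obtain L where L: "L \<in> Cp"
    "\<And>q. ((\<lambda>k. opsum a (\<lambda>n. indicator (range s) n * m n) k q) \<longlongrightarrow> L q) sequentially"
    using conv by blast
  have sum_lim: "((\<lambda>k. opsum (h \<circ> s) (\<lambda>_. 1) k q) \<longlongrightarrow> L q) sequentially" for q
    using LIMSEQ_subseq_LIMSEQ[OF L(2) s]
    by (simp add: comp_def opsum_indicator_times h_def[symmetric] opsum_indicator_range[OF s])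
  have "\<not> continuous_on UNIV L"
    by (rule bump_sum_not_continuous[where g = "h \<circ> s" and y = "x \<circ> s" and U = U and V = V])
      (use r V sum_lim LIMSEQ_subseq_LIMSEQ[OF \<phi>(2) r(1)] in \<open>simp_all add: s_def comp_assoc\<close>)
  with L(1) show False
    unfolding Cp_def by blast
qed

section \<open>TAP groups force compactness\<close>

lemma G_regularE:
  assumes "G_regular TYPE('a::topological_space) TYPE('g::{group_add,topological_space})"
    and "closed F" "x \<notin> F"
  obtains f :: "'a::topological_space \<Rightarrow> 'g::{group_add,topological_space}"
  where "f \<in> Cp" "f x \<noteq> 0" "f ` F \<subseteq> {0}"
  using assms unfolding G_regular_def by blast

lemma Lindelof_space_if_countable_network:
  assumes "has_countable_network X"
  shows "Lindelof_space X"
  unfolding Lindelof_space_alt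
proof (intro allI impI, elim conjE)
  fix \<U> assume \<U>_open: "\<forall>U\<in>\<U>. openin X U" and \<U>_cover: "topspace X \<subseteq> \<Union>\<U>"
  obtain \<N> where \<N>: "countable \<N>" "\<forall>U x. openin X U \<and> x \<in> U \<longrightarrow> (\<exists>N\<in>\<N>. x \<in> N \<and> N \<subseteq> U)"
    using assms unfolding has_countable_network_def by (elim exE conjE)
  define \<N>' where "\<N>' = {N \<in> \<N>. \<exists>U\<in>\<U>. N \<subseteq> U}"
  have "\<forall>N\<in>\<N>'. \<exists>U. U \<in> \<U> \<and> N \<subseteq> U"
    unfolding \<N>'_def by blast
  then obtain c where c: "\<forall>N\<in>\<N>'. c N \<in> \<U> \<and> N \<subseteq> c N"
    by (rule bchoice[THEN exE])
  show "\<exists>\<V>. countable \<V> \<and> \<V> \<subseteq> \<U> \<and> topspace X \<subseteq> \<Union>\<V>"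
  proof (intro exI conjI)
    show "countable (c ` \<N>')"
      using \<N>(1) unfolding \<N>'_def by simp
    show "c ` \<N>' \<subseteq> \<U>"
      using c by blast
    show "topspace X \<subseteq> \<Union>(c ` \<N>')"
    proof
      fix x assume "x \<in> topspace X"
      then obtain U where "U \<in> \<U>" "x \<in> U"
        using \<U>_cover by blast
      then obtain N where "N \<in> \<N>" "x \<in> N" "N \<subseteq> U"
        using \<N>(2) \<U>_open by blast
      then have "N \<in> \<N>'"
        unfolding \<N>'_def using \<open>U \<in> \<U>\<close> by blast
      then show "x \<in> \<Union>(c ` \<N>')"
        using c \<open>x \<in> N\<close> by blast
    qed
  qed
qed

lemma regular_space_closure_subset:
  fixes U :: "'a::topological_space set"
  assumes "regular_space (euclidean :: 'a topology)" "open U" "x \<in> U"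
  obtains W where "open W" "x \<in> W" "closure W \<subseteq> U"
proof -
  have "closedin euclidean (- U)" "x \<in> topspace euclidean - (- U)"
    using assms(2,3) by auto
  then obtain W where "openin euclidean W" "x \<in> W" "disjnt (- U) (euclidean closure_of W)"
    using assms(1)[unfolded regular_space, rule_format, of "- U" x] by blast
  then show ?thesis
    by (intro that) (auto simp: disjnt_def)
qed

lemma regular_Lindelof_noncompact_exhaustionE:
  assumes reg: "regular_space (euclidean :: 'a::topological_space topology)"
    and Lin: "Lindelof_space (euclidean :: 'a topology)"
    and noncompact: "\<not> compact (UNIV :: 'a set)"
  obtains W :: "nat \<Rightarrow> 'a::topological_space set"
  where "\<And>k. open (W k)" "incseq W" "(\<Union>k. W k) = UNIV" "\<And>k. closure (W k) \<noteq> UNIV"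
proof -
  obtain \<U> :: "'a set set" where \<U>_open: "\<forall>U\<in>\<U>. open U" and \<U>_cover: "UNIV \<subseteq> \<Union>\<U>"
    and no_finite_subcover: "\<And>\<D>. \<D> \<subseteq> \<U> \<Longrightarrow> finite \<D> \<Longrightarrow> \<not> UNIV \<subseteq> \<Union>\<D>"
    using noncompact unfolding compact_eq_Heine_Borel not_all not_imp
    by (elim exE conjE) (blast intro: that)
  define \<V> where "\<V> = {W. open W \<and> (\<exists>U\<in>\<U>. closure W \<subseteq> U)}"
  have "x \<in> \<Union>\<V>" for x
  proof -
    obtain U where "U \<in> \<U>" "x \<in> U"
      using \<U>_cover by blast
    moreover from this have "open U"
      using \<U>_open by blast
    ultimately obtain W where "open W" "x \<in> W" "closure W \<subseteq> U"
      using regular_space_closure_subset[OF reg] by blast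
    with \<open>U \<in> \<U>\<close> show ?thesis
      unfolding \<V>_def by blast
  qed
  then have "\<Union>\<V> = UNIV"
    by blast
  moreover have "openin euclidean W" if "W \<in> \<V>" for W
    using that unfolding \<V>_def by simp
  ultimately obtain \<C> where \<C>: "countable \<C>" "\<C> \<subseteq> \<V>" "\<Union>\<C> = UNIV"
    using Lindelof_spaceD[OF Lin, of \<V>] by auto
  then have "\<C> \<noteq> {}"
    by auto
  define e where "e = from_nat_into \<C>"
  have e: "range e = \<C>"
    unfolding e_def using \<C>(1) \<open>\<C> \<noteq> {}\<close> by (simp add: range_from_nat_into)
  have e_\<V>: "e j \<in> \<V>" for j
    using e \<C>(2) by blast
  then have "\<forall>j. \<exists>U. U \<in> \<U> \<and> closure (e j) \<subseteq> U"
    unfolding \<V>_def by blast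
  then obtain V where V: "\<And>j. V j \<in> \<U> \<and> closure (e j) \<subseteq> V j"
    by metis
  define W where "W k = (\<Union>j\<le>k. e j)" for k
  show thesis
  proof (rule that)
    show "open (W k)" for k
      unfolding W_def using e_\<V> by (intro open_UN) (simp add: \<V>_def)
    show "incseq W"
      unfolding W_def incseq_def by (intro allI impI UN_mono) auto
    have "(\<Union>j. e j) = UNIV"
      using e \<C>(3) by simp
    then show "(\<Union>k. W k) = UNIV"
      unfolding W_def by auto
    show "closure (W k) \<noteq> UNIV" for k
    proof
      have "closure (W k) \<subseteq> (\<Union>j\<le>k. closure (e j))"
        unfolding W_def by (rule closure_minimal) (auto intro: closure_subset[THEN subsetD])
      also have "\<dots> \<subseteq> (\<Union>j\<le>k. V j)"
        using V by blast
      finally have "closure (W k) \<subseteq> \<Union>(V ` {..k})" .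
      moreover assume "closure (W k) = UNIV"
      ultimately have "UNIV \<subseteq> \<Union>(V ` {..k})"
        by auto
      moreover have "V ` {..k} \<subseteq> \<U>"
        using V by blast
      ultimately show False
        using no_finite_subcover by blast
    qed
  qed
qed

lemma limitin_Cp_opsum_if_locally_eventually_zero:
  fixes b :: "nat \<Rightarrow> 'a::topological_space \<Rightarrow> 'g::{topological_group_add,t2_space}"
  assumes b_Cp: "\<And>m. b m \<in> Cp"
    and W: "\<And>j. open (W j)" "(\<Union>j. W j) = UNIV"
    and b_vanish: "\<And>j. \<forall>\<^sub>F m in sequentially. \<forall>y\<in>W j. b m y = 0"
  shows "\<exists>L. limitin (subtopology euclidean Cp) (opsum b z) L sequentially"
proof -
  have "\<forall>j. \<exists>N. \<forall>m\<ge>N. \<forall>y\<in>W j. b m y = 0"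
    using b_vanish unfolding eventually_sequentially by blast
  then obtain M where M: "\<And>j m y. M j \<le> m \<Longrightarrow> y \<in> W j \<Longrightarrow> b m y = 0"
    by metis
  have stable: "opsum b z n y = opsum b z (M j) y" if "y \<in> W j" "M j \<le> n" for y j n
    unfolding opsum_apply by (rule opsum_constant_after[OF _ that(2)]) (simp add: M[of j] that(1) less_imp_le)
  define L where "L y = lim (\<lambda>n. opsum b z n y)" for y
  have L: "opsum b z n y = L y" if "y \<in> W j" "M j \<le> n" for y j n
  proof -
    have "((\<lambda>n. opsum b z n y) \<longlongrightarrow> opsum b z (M j) y) sequentially"
      using stable[OF that(1)] by (intro tendsto_eventually eventually_sequentiallyI[of "M j"])
    then have "L y = opsum b z (M j) y"
      unfolding L_def by (rule limI)
    then show ?thesis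
      using stable[OF that] by simp
  qed
  have "continuous_on (W j) L" for j
  proof (rule continuous_on_eq)
    show "continuous_on (W j) (opsum b z (M j))"
      using opsum_in_Cp[where a = b, OF b_Cp] unfolding Cp_def by (blast intro: continuous_on_subset)
  qed (use L in auto)
  then have "continuous_on UNIV L"
    using continuous_on_open_Union[of "range W" L] W by auto
  moreover have "((\<lambda>n. opsum b z n y) \<longlongrightarrow> L y) sequentially" for y
  proof -
    obtain j where "y \<in> W j"
      using W(2) by blast
    then show ?thesis
      using L by (intro tendsto_eventually eventually_sequentiallyI[of "M j"])
  qed
  ultimately show ?thesis
    unfolding limitin_Cp_iff using opsum_in_Cp[where a = b, OF b_Cp]
    by (intro exI[of _ L]) (simp add: Cp_def)
qed

lemma compact_if_TAP_Cp:
  assumes reg: "regular_space (euclidean :: 'a::topological_space topology)"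
    and Lin: "Lindelof_space (euclidean :: 'a topology)"
    and greg: "G_regular TYPE('a) TYPE('g::{topological_group_add,t2_space})"
    and tap: "TAP (Cp :: ('a \<Rightarrow> 'g) set)"
  shows "compact (UNIV :: 'a set)"
proof (rule ccontr)
  assume "\<not> compact (UNIV :: 'a set)"
  then obtain W :: "nat \<Rightarrow> 'a set" where W: "\<And>k. open (W k)" "incseq W" "(\<Union>k. W k) = UNIV"
    "\<And>k. closure (W k) \<noteq> UNIV"
    using regular_Lindelof_noncompact_exhaustionE[OF reg Lin] by blast
  have "\<exists>f x. f \<in> Cp \<and> f x \<noteq> (0::'g) \<and> f ` closure (W k) \<subseteq> {0}" for k
  proof -
    obtain x where "x \<notin> closure (W k)"
      using W(4)[of k] by blast
    then obtain f :: "'a \<Rightarrow> 'g" where "f \<in> Cp" "f x \<noteq> 0" "f ` closure (W k) \<subseteq> {0}"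
      using G_regularE[OF greg closed_closure] by blast
    then show ?thesis
      by blast
  qed
  then obtain f :: "nat \<Rightarrow> 'a \<Rightarrow> 'g" and x
    where f: "\<And>k. f k \<in> Cp" "\<And>k. f k (x k) \<noteq> 0" "\<And>k. f k ` closure (W k) \<subseteq> {0}"
    by metis
  have f_vanish: "f k y = 0" if "j \<le> k" "y \<in> W j" for j k y
  proof -
    have "y \<in> closure (W k)"
      using that W(2) closure_subset by (auto dest: incseqD)
    then show ?thesis
      using f(3)[of k] by blast
  qed
  have finite_fibres: "finite (f -` {f k0})" for k0
  proof -
    obtain j where j: "x k0 \<in> W j"
      using W(3) by blast
    have "k < j" if "f k = f k0" for k
      using f_vanish[OF _ j, of k] f(2)[of k0] that by (cases "j \<le> k") auto
    then have "f -` {f k0} \<subseteq> {..<j}"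
      by auto
    then show ?thesis
      by (rule finite_subset) simp
  qed
  have f_infinite: "infinite (range f)"
  proof
    assume "finite (range f)"
    then obtain v where "v \<in> range f" "infinite (f -` {v})"
      using inf_img_fin_domE[OF _ infinite_UNIV_nat] by blast
    then show False
      using finite_fibres by blast
  qed
  have "absolutely_productive Cp (range f)"
    unfolding absolutely_productive_def
  proof (intro conjI allI impI)
    show "range f \<subseteq> Cp"
      using f(1) by blast
    fix b :: "nat \<Rightarrow> 'a \<Rightarrow> 'g" and z assume "inj b \<and> range b \<subseteq> range f"
    then have b: "inj b" "range b \<subseteq> range f"
      by blast+
    then have "\<forall>m. \<exists>k. b m = f k"
      by blast
    then obtain \<sigma> where \<sigma>: "\<And>m. b m = f (\<sigma> m)"
      by metis
    have "b = f \<circ> \<sigma>"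
      using \<sigma> by (simp add: fun_eq_iff)
    with b(1) have "inj \<sigma>"
      by (auto intro: inj_on_imageI2)
    have \<sigma>_large: "\<forall>\<^sub>F m in sequentially. j \<le> \<sigma> m" for j
    proof -
      have "finite (\<sigma> -` {..<j})"
        using \<open>inj \<sigma>\<close> by (intro finite_vimageI) auto
      then show ?thesis
        unfolding cofinite_eq_sequentially[symmetric] eventually_cofinite
        by (simp add: not_le vimage_def)
    qed
    show "\<exists>L. limitin (subtopology euclidean Cp) (opsum b z) L sequentially"
    proof (rule limitin_Cp_opsum_if_locally_eventually_zero[OF _ W(1,3)])
      show "b m \<in> Cp" for m
        using \<sigma> f(1) by simp
      show "\<forall>\<^sub>F m in sequentially. \<forall>y\<in>W j. b m y = 0" for j
        using \<sigma>_large[of j] by (rule eventually_mono) (auto simp: \<sigma> intro: f_vanish)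
    qed
  qed
  moreover have "range f \<subseteq> Cp"
    using f(1) by blast
  ultimately have "finite (range f)"
    using tap unfolding TAP_def by blast
  with f_infinite show False
    by contradiction
qed

section \<open>Countable networks and metrizability\<close>

lemma (in Metric_space) second_countable_if_countable_dense:
  assumes "countable C" "C \<subseteq> M" "\<And>x e. x \<in> M \<Longrightarrow> e > 0 \<Longrightarrow> \<exists>c\<in>C. d c x < e"
  shows "second_countable mtopology"
  unfolding second_countable_def
proof (intro exI conjI ballI allI impI)
  define \<B> where "\<B> = (\<lambda>(c,n::nat). mball c (1 / Suc n)) ` (C \<times> UNIV)"
  show "countable \<B>"
    unfolding \<B>_def using assms(1) by auto
  show "openin mtopology V" if "V \<in> \<B>" for V using that unfolding \<B>_def by auto
  fix U x assume "openin mtopology U \<and> x \<in> U"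
  then obtain r where r: "r > 0" "mball x r \<subseteq> U" "x \<in> M"
    unfolding openin_mtopology by blast
  obtain n :: nat where n: "1 / Suc n < r / 2"
    using r(1) by (metis half_gt_zero nat_approx_posE)
  have "1 / real (Suc n) > 0"
    by simp
  then obtain c where c: "c \<in> C" "d c x < 1 / Suc n"
    using assms(3)[OF r(3)] by blast
  have cM: "c \<in> M"
    using c assms(2) by auto
  show "\<exists>V\<in>\<B>. x \<in> V \<and> V \<subseteq> U"
  proof (intro bexI conjI)
    show "mball c (1 / Suc n) \<in> \<B>"
      unfolding \<B>_def using c by auto
    show "x \<in> mball c (1 / Suc n)"
      using c cM r by simp
    show "mball c (1 / Suc n) \<subseteq> U"
    proof
      fix y assume y: "y \<in> mball c (1 / Suc n)"
      then have "d x y \<le> d x c + d c y"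
        using cM r(3) triangle by auto
      also have "\<dots> < r" using c y n by (simp add: commute)
      finally have "y \<in> mball x r" using y r(3) by simp
      then show "y \<in> U"
        using r(2) by auto
    qed
  qed
qed

lemma second_countable_if_separable_metrizable:
  assumes "metrizable_space X" "separable_space X"
  shows "second_countable X"
proof -
  obtain M d where Md: "Metric_space M d" "X = Metric_space.mtopology M d"
    using assms(1) unfolding metrizable_space_def by blast
  interpret Metric_space M d by (rule Md(1))
  obtain C where C: "countable C" "C \<subseteq> M" "mtopology closure_of C = M"
    using assms(2) unfolding separable_space_def Md(2) by auto
  have "\<exists>c\<in>C. d c x < e" if xM: "x \<in> M" and e: "e > 0" for x e
  proof -
    have "x \<in> mtopology closure_of C"
      using C(3) xM by simp
    then obtain y where "y \<in> C" "y \<in> mball x e"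
      using e unfolding metric_closure_of by blast
    then show ?thesis by (auto simp: commute)
  qed
  then show ?thesis unfolding Md(2) by (rule second_countable_if_countable_dense[OF C(1,2)])
qed

lemma second_countable_if_compact_metrizable:
  assumes "metrizable_space X" "compact_space X"
  shows "second_countable X"
proof -
  obtain M d where Md: "Metric_space M d" "X = Metric_space.mtopology M d"
    using assms(1) unfolding metrizable_space_def by blast
  interpret Metric_space M d by (rule Md(1))
  have tb: "mtotally_bounded M"
    using assms(2) unfolding Md(2) compact_space_def by (simp add: compactin_imp_mtotally_bounded)
  have "\<exists>K. finite K \<and> K \<subseteq> M \<and> M \<subseteq> (\<Union>x\<in>K. mball x (1 / Suc n))" for n :: nat
    using tb unfolding mtotally_bounded_def by simp
  then obtain K where K: "\<And>n. finite (K n) \<and> K n \<subseteq> M \<and> M \<subseteq> (\<Union>x\<in>K n. mball x (1 / Suc n))"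
    by metis
  have "countable (\<Union>n. K n)"
    using K by (simp add: countable_finite)
  moreover have "(\<Union>n. K n) \<subseteq> M"
    using K by auto
  moreover have "\<exists>c\<in>(\<Union>n. K n). d c x < e" if xM: "x \<in> M" and e: "e > 0" for x e
  proof -
    obtain n :: nat where n: "1 / Suc n < e"
      using e by (metis nat_approx_posE)
    obtain c where "c \<in> K n" "x \<in> mball c (1 / Suc n)"
      using K[of n] xM by blast
    then show ?thesis using n by force
  qed
  ultimately show ?thesis unfolding Md(2) by (rule second_countable_if_countable_dense)
qed

lemma seq_compact_if_compact_metrizable:
  assumes "metrizable_space (euclidean :: 'a::topological_space topology)"
    and "compact_space (euclidean :: 'a topology)"
  shows "seq_compact (UNIV :: 'a set)"
proof (rule seq_compactI)
  fix x :: "nat \<Rightarrow> 'a"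
  obtain M d where "Metric_space M d" and X: "(euclidean :: 'a topology) = Metric_space.mtopology M d"
    using assms(1) unfolding metrizable_space_def by blast
  interpret Metric_space M d by fact
  have "M = UNIV"
    using X topspace_mtopology by (metis topspace_euclidean)
  moreover have "compact_space mtopology"
    using assms(2) X by simp
  ultimately obtain l r where "strict_mono r" "limitin mtopology (x \<circ> r) l sequentially"
    unfolding compact_space_sequentially by blast
  then show "\<exists>l\<in>UNIV. \<exists>r. strict_mono r \<and> (x \<circ> r) \<longlonglongrightarrow> l"
    using X by (metis UNIV_I limitin_canonical_iff)
qed

lemma open_evaluation: "open (B::'g::topological_space set) \<Longrightarrow> open {h::'a \<Rightarrow> 'g. h x \<in> B}"
  using open_vimage[OF _ continuous_on_product_coordinates, of B x] by (simp add: vimage_def)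

lemma has_countable_network_Cp:
  assumes "second_countable (euclidean :: 'a::topological_space topology)"
    and "second_countable (euclidean :: 'g::topological_group_add topology)"
  shows "has_countable_network (subtopology euclidean (Cp :: ('a \<Rightarrow> 'g) set))"
proof -
  obtain BX :: "'a set set" where BX: "countable BX" "\<And>V. V \<in> BX \<Longrightarrow> open V"
     "\<And>U x. open U \<Longrightarrow> x \<in> U \<Longrightarrow> \<exists>V\<in>BX. x \<in> V \<and> V \<subseteq> U"
    using assms(1) unfolding second_countable_def by auto
  obtain BG :: "'g set set" where BG: "countable BG" "\<And>V. V \<in> BG \<Longrightarrow> open V"
     "\<And>U x. open U \<Longrightarrow> x \<in> U \<Longrightarrow> \<exists>V\<in>BG. x \<in> V \<and> V \<subseteq> U"
    using assms(2) unfolding second_countable_def by auto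
  define N where "N S = {f \<in> (Cp :: ('a \<Rightarrow> 'g) set). \<forall>(B,V)\<in>S. f ` B \<subseteq> V}" for S
  define \<N> where "\<N> = N ` {S. finite S \<and> S \<subseteq> BX \<times> BG}"
  show ?thesis unfolding has_countable_network_def
  proof (intro exI conjI ballI allI impI)
    show "countable \<N>"
      unfolding \<N>_def by (intro countable_image countable_Collect_finite_subset countable_SIGMA BX(1) BG(1))
    show "A \<subseteq> topspace (subtopology euclidean Cp)" if "A \<in> \<N>" for A
      using that unfolding \<N>_def N_def by auto
    fix U and f :: "'a \<Rightarrow> 'g" assume Uf: "openin (subtopology euclidean Cp) U \<and> f \<in> U"
    then obtain T where T: "open T" "U = T \<inter> Cp"
      by (auto simp: openin_subtopology)
    have fT: "f \<in> T" and fCp: "f \<in> Cp"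
      using Uf T by auto
    then obtain V where V: "finite {i. V i \<noteq> UNIV}" "\<And>i. open (V i)" "f \<in> Pi\<^sub>E UNIV V"
       "Pi\<^sub>E UNIV V \<subseteq> T"
      using T(1) unfolding open_fun_def openin_product_topology_alt by fastforce
    define I where "I = {i. V i \<noteq> UNIV}"
    have fc: "continuous_on UNIV f"
      using fCp unfolding Cp_def by simp
    have "\<exists>B W. B \<in> BX \<and> W \<in> BG \<and> i \<in> B \<and> f i \<in> W \<and> W \<subseteq> V i \<and> f ` B \<subseteq> W" for i
    proof -
      obtain W where W: "W \<in> BG" "f i \<in> W" "W \<subseteq> V i"
        using BG(3)[OF V(2)] V(3) by blast
      have "open (f -` W)"
        using fc BG(2)[OF W(1)] by (simp add: open_vimage)
      then obtain B where "B \<in> BX" "i \<in> B" "B \<subseteq> f -` W"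
        using BX(3) W(2) by blast
      with W show ?thesis
        by blast
    qed
    then obtain B W where BW: "\<And>i. B i \<in> BX \<and> W i \<in> BG \<and> i \<in> B i \<and> f i \<in> W i \<and> W i \<subseteq> V i \<and> f ` B i \<subseteq> W i"
      by metis
    define S where "S = (\<lambda>i. (B i, W i)) ` I"
    show "\<exists>A\<in>\<N>. f \<in> A \<and> A \<subseteq> U"
    proof (intro bexI conjI)
      show "N S \<in> \<N>"
        unfolding \<N>_def S_def using V(1) BW unfolding I_def by auto
      show "f \<in> N S"
        unfolding N_def S_def using fCp BW by auto
      show "N S \<subseteq> U"
      proof
        fix g assume g: "g \<in> N S"
        have "g \<in> Pi\<^sub>E UNIV V"
        proof (simp add: PiE_def Pi_def, intro allI)
          fix i
          show "g i \<in> V i"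
          proof (cases "i \<in> I")
            case True
            then have "g ` B i \<subseteq> W i"
              using g unfolding N_def S_def by auto
            then show ?thesis
              using BW[of i] by auto
          next
            case False
            then show ?thesis
              unfolding I_def by auto
          qed
        qed
        then show "g \<in> U"
          using g V(4) T(2) unfolding N_def by auto
      qed
    qed
  qed
qed

lemma has_countable_network_if_Cp_network:
  assumes greg: "G_regular TYPE('a::topological_space) TYPE('g::{topological_group_add,t2_space})"
    and scG: "second_countable (euclidean :: 'g topology)"
    and net: "has_countable_network (subtopology euclidean (Cp :: ('a \<Rightarrow> 'g) set))"
  shows "has_countable_network (euclidean :: 'a topology)"
proof -
  obtain BG :: "'g set set" where BG: "countable BG" "\<And>V. V \<in> BG \<Longrightarrow> open V"
     "\<And>U x. open U \<Longrightarrow> x \<in> U \<Longrightarrow> \<exists>V\<in>BG. x \<in> V \<and> V \<subseteq> U"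
    using scG unfolding second_countable_def by auto
  obtain \<N> :: "('a \<Rightarrow> 'g) set set" where \<N>: "countable \<N>"
    "\<forall>U f. openin (subtopology euclidean Cp) U \<and> f \<in> U \<longrightarrow> (\<exists>N\<in>\<N>. f \<in> N \<and> N \<subseteq> U)"
    using net unfolding has_countable_network_def by blast
  define M where "M N B = {x. \<forall>f\<in>N. f x \<in> B}" for N :: "('a \<Rightarrow> 'g) set" and B
  show ?thesis
    unfolding has_countable_network_def
  proof (intro exI[of _ "case_prod M ` (\<N> \<times> BG)"] conjI ballI allI impI)
    show "countable (case_prod M ` (\<N> \<times> BG))"
      by (intro countable_image countable_SIGMA \<N>(1) BG(1))
    show "A \<subseteq> topspace euclidean" for A
      by simp
    fix U and x :: 'a assume "openin euclidean U \<and> x \<in> U"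
    then have "closed (- U)" "x \<notin> - U"
      by auto
    then obtain f :: "'a \<Rightarrow> 'g" where f: "f \<in> Cp" "f x \<noteq> 0" "f ` (- U) \<subseteq> {0}"
      by (rule G_regularE[OF greg])
    obtain Og where Og: "open Og" "f x \<in> Og" "0 \<notin> Og"
      using f(2) separation_t1 by blast
    obtain B where B: "B \<in> BG" "f x \<in> B" "B \<subseteq> Og"
      using BG(3)[OF Og(1,2)] by blast
    have "openin (subtopology euclidean Cp) ({h. h x \<in> B} \<inter> Cp)"
      using open_evaluation[OF BG(2)[OF B(1)]] by (intro openin_subtopology_Int) simp
    then obtain N where N: "N \<in> \<N>" "f \<in> N" "N \<subseteq> {h. h x \<in> B} \<inter> Cp"
      using \<N>(2) f(1) B(2) by blast
    have "M N B \<subseteq> U"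
    proof
      fix y assume "y \<in> M N B"
      then have "f y \<in> B"
        using N(2) unfolding M_def by blast
      then have "f y \<noteq> 0"
        using B(3) Og(3) by auto
      then show "y \<in> U"
        using f(3) by blast
    qed
    moreover have "x \<in> M N B"
      using N(3) unfolding M_def by auto
    moreover have "M N B \<in> case_prod M ` (\<N> \<times> BG)"
      using N(1) B(1) by (intro rev_image_eqI[of "(N, B)"]) simp_all
    ultimately show "\<exists>A\<in>case_prod M ` (\<N> \<times> BG). x \<in> A \<and> A \<subseteq> U"
      by (intro bexI[of _ "M N B"] conjI)
  qed
qed

lemma countable_separating_family_if_Cp_network:
  assumes t1: "t1_space (euclidean :: 'a::topological_space topology)"
    and greg: "G_regular TYPE('a) TYPE('g::{topological_group_add,t2_space})"
    and net: "has_countable_network (subtopology euclidean (Cp :: ('a \<Rightarrow> 'g) set))"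
  obtains d :: "nat \<Rightarrow> 'a::topological_space \<Rightarrow> 'g::{topological_group_add,t2_space}"
  where "\<And>i. d i \<in> Cp" "\<And>x y. x \<noteq> y \<Longrightarrow> \<exists>i. d i x \<noteq> d i y"
proof -
  obtain \<N> :: "('a \<Rightarrow> 'g) set set" where \<N>: "countable \<N>"
    "\<forall>N\<in>\<N>. N \<subseteq> topspace (subtopology euclidean Cp)"
    "\<forall>U f. openin (subtopology euclidean Cp) U \<and> f \<in> U \<longrightarrow> (\<exists>N\<in>\<N>. f \<in> N \<and> N \<subseteq> U)"
    using net unfolding has_countable_network_def by blast
  define pick where "pick N = (SOME f. f \<in> N)" for N :: "('a \<Rightarrow> 'g) set"
  have pick: "pick N \<in> N" if "N \<noteq> {}" for N
    unfolding pick_def using that by (simp add: some_in_eq)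
  define D where "D = insert 0 (pick ` (\<N> - {{}}))"
  have "pick N \<in> Cp" if "N \<in> \<N> - {{}}" for N
    using that pick[of N] \<N>(2) by auto
  then have D: "countable D" "D \<noteq> {}" "D \<subseteq> Cp"
    using \<N>(1) Cp_zero unfolding D_def by auto
  have separates: "\<exists>h\<in>D. h x \<noteq> h y" if xy: "x \<noteq> y" for x y
  proof -
    have "closed {y}" "x \<notin> {y}"
      using t1 xy by (simp_all add: t1_space_closedin_singleton)
    then obtain f :: "'a \<Rightarrow> 'g" where f: "f \<in> Cp" "f x \<noteq> 0" "f ` {y} \<subseteq> {0}"
      by (rule G_regularE[OF greg])
    obtain O1 O2 where O: "open O1" "open O2" "f x \<in> O1" "0 \<in> O2" "O1 \<inter> O2 = {}"
      using hausdorff[OF f(2)] by blast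
    define T where "T = {h::'a \<Rightarrow> 'g. h x \<in> O1} \<inter> {h. h y \<in> O2}"
    have "open T"
      unfolding T_def using O(1,2) by (intro open_Int open_evaluation)
    then have "openin (subtopology euclidean Cp) (T \<inter> Cp)"
      by (intro openin_subtopology_Int) simp
    moreover have "f \<in> T \<inter> Cp"
      unfolding T_def using f O(3,4) by simp
    ultimately obtain N where N: "N \<in> \<N>" "f \<in> N" "N \<subseteq> T \<inter> Cp"
      using \<N>(3) by blast
    then have "N \<noteq> {}"
      by blast
    then have "pick N \<in> T" "pick N \<in> D"
      using pick[of N] N(1,3) unfolding D_def by auto
    moreover have "pick N x \<noteq> pick N y"
      using \<open>pick N \<in> T\<close> O(5) unfolding T_def by auto
    ultimately show ?thesis
      by blast
  qed
  show thesis
  proof (rule that[of "from_nat_into D"])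
    show "from_nat_into D i \<in> Cp" for i
      using from_nat_into[OF D(2)] D(3) by blast
    show "\<exists>i. from_nat_into D i x \<noteq> from_nat_into D i y" if xy: "x \<noteq> y" for x y
    proof -
      obtain h where "h \<in> D" "h x \<noteq> h y"
        using separates[OF xy] by blast
      moreover have "h \<in> range (from_nat_into D)"
        using \<open>h \<in> D\<close> range_from_nat_into[OF D(2,1)] by simp
      then obtain i where "h = from_nat_into D i"
        by blast
      ultimately show ?thesis
        by blast
    qed
  qed
qed

lemma metrizable_if_compact_countably_separated:
  assumes compact: "compact_space (euclidean :: 'a::topological_space topology)"
    and metG: "metrizable_space (euclidean :: 'g::topological_space topology)"
    and d_cont: "\<And>i::nat. continuous_on UNIV (d i :: 'a \<Rightarrow> 'g)"
    and separates: "\<And>x y. x \<noteq> y \<Longrightarrow> \<exists>i. d i x \<noteq> d i y"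
  shows "metrizable_space (euclidean :: 'a topology)"
proof -
  define \<Phi> where "\<Phi> x = (\<lambda>i. d i x)" for x
  have cont: "continuous_map euclidean euclidean \<Phi>"
    unfolding continuous_map_iff_continuous2 \<Phi>_def
    by (rule continuous_on_coordinatewise_then_product) (rule d_cont)
  have inj: "inj_on \<Phi> (topspace euclidean)"
    unfolding inj_on_def \<Phi>_def using separates by metis
  have "metrizable_space (product_topology (\<lambda>_::nat. (euclidean :: 'g topology)) UNIV)"
    unfolding metrizable_space_product_topology using metG by simp
  then have metP: "metrizable_space (euclidean :: (nat \<Rightarrow> 'g) topology)"
    by (simp add: euclidean_product_topology)
  then have "closed_map euclidean euclidean \<Phi>"
    by (intro continuous_imp_closed_map[OF cont compact] metrizable_imp_Hausdorff_space)
  then have "embedding_map euclidean euclidean \<Phi>"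
    by (rule injective_closed_imp_embedding_map[OF cont _ inj])
  then have "(euclidean :: 'a topology) homeomorphic_space subtopology euclidean (\<Phi> ` topspace euclidean)"
    by (rule embedding_map_imp_homeomorphic_space)
  then show ?thesis
    using homeomorphic_metrizable_space metrizable_space_subtopology[OF metP] by blast
qed

theorem theorem7p8:
  assumes "completely_regular_space (euclidean :: 'a::topological_space topology)"
    and "Hausdorff_space (euclidean :: 'a topology)"
    and "separable_space (euclidean :: 'g::{topological_group_add, t2_space} topology)"
    and "metrizable_space (euclidean :: 'g topology)"
    and "NSS TYPE('g)"
    and "G_regular TYPE('a) TYPE('g)"
  shows "(compact_space (euclidean :: 'a topology) \<and> metrizable_space (euclidean :: 'a topology))
     \<longleftrightarrow> (TAP (Cp :: ('a \<Rightarrow> 'g) set) \<and>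
          has_countable_network (subtopology euclidean (Cp :: ('a \<Rightarrow> 'g) set)))"
proof -
  have scG: "second_countable (euclidean :: 'g topology)"
    using assms(3,4) by (intro second_countable_if_separable_metrizable)
  show ?thesis
  proof
    assume "compact_space (euclidean :: 'a topology) \<and> metrizable_space (euclidean :: 'a topology)"
    then have "seq_compact (UNIV :: 'a set)" "second_countable (euclidean :: 'a topology)"
      by (simp_all add: seq_compact_if_compact_metrizable second_countable_if_compact_metrizable)
    then show "TAP (Cp :: ('a \<Rightarrow> 'g) set) \<and> has_countable_network (subtopology euclidean (Cp :: ('a \<Rightarrow> 'g) set))"
      using TAP_Cp_if_seq_compact[OF assms(5)] has_countable_network_Cp scG by blast
  next
    assume "TAP (Cp :: ('a \<Rightarrow> 'g) set) \<and> has_countable_network (subtopology euclidean (Cp :: ('a \<Rightarrow> 'g) set))"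
    then have TAP: "TAP (Cp :: ('a \<Rightarrow> 'g) set)"
      and net: "has_countable_network (subtopology euclidean (Cp :: ('a \<Rightarrow> 'g) set))"
      by blast+
    have "Lindelof_space (euclidean :: 'a topology)"
      using has_countable_network_if_Cp_network[OF assms(6) scG net] by (rule Lindelof_space_if_countable_network)
    then have "compact_space (euclidean :: 'a topology)"
      using compact_if_TAP_Cp[OF completely_regular_imp_regular_space[OF assms(1)] _ assms(6) TAP]
      by (simp add: compact_space_def)
    moreover obtain d :: "nat \<Rightarrow> 'a \<Rightarrow> 'g" where "\<And>i. d i \<in> Cp" "\<And>x y. x \<noteq> y \<Longrightarrow> \<exists>i. d i x \<noteq> d i y"
      using countable_separating_family_if_Cp_network[OF Hausdorff_imp_t1_space[OF assms(2)] assms(6) net]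
      by blast
    ultimately show "compact_space (euclidean :: 'a topology) \<and> metrizable_space (euclidean :: 'a topology)"
      using assms(4) metrizable_if_compact_countably_separated unfolding Cp_def by blast
  qed
qed

end
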